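(* Let $P$ be a convex polygon, let $\mathcal{R}$ be the smallest axis-parallel rectangle containing $P$, with side lengths $L\ge W>0$, and let $r=\frac14\sqrt{L^2+4W^2}$. Suppose that $P$ has three vertices forming a triangle such that one of these vertices coincides with a corner of $\mathcal{R}$ and the other two lie respectively on the two sides of $\mathcal{R}$ not incident to that corner. Then $r\le 2\,r_{opt}(P)$.
   Context: For a compact set $X\subset\mathbb{R}^2$, $r_{opt}(X)$ denotes the minimum $r$ such that two closed disks of radius $r$ have union containing $X$. The number $r$ is the radius of the two congruent disks circumscribing the two halves $\frac L2\times W$ of $\mathcal{R}$. *)

theory Defs
  imports "HOL-Analysis.Analysis"
begin

text \<open>Points of the plane are pairs of reals; the product metric on real \<times> real is Euclidean.\<close>

definition convex_polygon :: "(real \<times> real) set \<Rightarrow> bool" where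
  "convex_polygon P \<longleftrightarrow> (\<exists>S. finite S \<and> P = convex hull S) \<and> interior P \<noteq> {}"

definition vertex_of :: "(real \<times> real) \<Rightarrow> (real \<times> real) set \<Rightarrow> bool" where
  "vertex_of x P \<longleftrightarrow> x extreme_point_of P"

text \<open>Smallest axis-parallel rectangle containing P: [xmin,xmax] \<times> [ymin,ymax].\<close>
definition xmin :: "(real \<times> real) set \<Rightarrow> real" where "xmin P = Inf (fst ` P)"
definition xmax :: "(real \<times> real) set \<Rightarrow> real" where "xmax P = Sup (fst ` P)"
definition ymin :: "(real \<times> real) set \<Rightarrow> real" where "ymin P = Inf (snd ` P)"
definition ymax :: "(real \<times> real) set \<Rightarrow> real" where "ymax P = Sup (snd ` P)"

definition bbox_L :: "(real \<times> real) set \<Rightarrow> real" where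
  "bbox_L P = max (xmax P - xmin P) (ymax P - ymin P)"
definition bbox_W :: "(real \<times> real) set \<Rightarrow> real" where
  "bbox_W P = min (xmax P - xmin P) (ymax P - ymin P)"

definition r_opt :: "(real \<times> real) set \<Rightarrow> real" where
  "r_opt X = Inf {r. r \<ge> 0 \<and> (\<exists>c1 c2. X \<subseteq> cball c1 r \<union> cball c2 r)}"

end

theory Submission
  imports Defs
begin

text \<open>
  Let the corner vertex u see the opposite sides of the bounding box through v and w, and put
  \<open>d = \<surd>(L\<^sup>2 + 4W\<^sup>2) / 4\<close>. Two disks of radius \<open>\<rho>\<close> cannot cover three points that are pairwise
  further than \<open>2\<rho>\<close> apart. If one of the sides uv, uw has length at least \<open>2d\<close>, its endpoints
  and midpoint are such three points of P, and otherwise an elementary estimate shows that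
  all three sides of the triangle uvw are at least \<open>d\<close>. Either way \<open>d \<le> 2\<rho>\<close> for every cover.
\<close>

lemma two_cballs_close_pair:
  assumes "{x, y, z} \<subseteq> cball c1 r \<union> cball c2 r"
  shows "dist x y \<le> 2 * r \<or> dist y z \<le> 2 * r \<or> dist x z \<le> 2 * r"
proof -
  have same_ball: "dist p q \<le> 2 * r" if "p \<in> cball c r" "q \<in> cball c r" for p q c :: 'a
    using dist_triangle3[of p q c] that by simp
  have "x \<in> cball c1 r \<or> x \<in> cball c2 r" "y \<in> cball c1 r \<or> y \<in> cball c2 r"
    "z \<in> cball c1 r \<or> z \<in> cball c2 r"
    using assms by auto
  then show ?thesis
    using same_ball by metis
qed

lemma two_cballs_cover_separated:
  assumes "{x, y, z} \<subseteq> cball c1 r \<union> cball c2 r"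
    and "d \<le> dist x y" "d \<le> dist y z" "d \<le> dist x z"
  shows "d \<le> 2 * r"
  using two_cballs_close_pair[OF assms(1)] assms(2-4) by linarith

lemma convex_two_cballs_cover_dist:
  fixes S :: "'a::real_normed_vector set"
  assumes "convex S" "S \<subseteq> cball c1 r \<union> cball c2 r" "p \<in> S" "q \<in> S"
  shows "dist p q \<le> 4 * r"
proof -
  have "midpoint p q \<in> S"
    using assms(1,3,4) midpoint_in_closed_segment convex_contains_segment by blast
  moreover have "dist p (midpoint p q) = dist p q / 2" "dist (midpoint p q) q = dist p q / 2"
    by (simp_all add: dist_midpoint)
  ultimately have "dist p q / 2 \<le> 2 * r"
    using assms(2-4) by (intro two_cballs_cover_separated[of p "midpoint p q" q c1 r c2]) auto
  then show ?thesis by simp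
qed

lemma convex_two_cballs_cover_triangle:
  fixes S :: "'a::real_normed_vector set"
  assumes "convex S" "S \<subseteq> cball c1 r \<union> cball c2 r" "u \<in> S" "v \<in> S" "w \<in> S"
    and "4 * Q \<le> (dist u v)\<^sup>2 \<or> 4 * Q \<le> (dist u w)\<^sup>2 \<or>
      (Q \<le> (dist u v)\<^sup>2 \<and> Q \<le> (dist u w)\<^sup>2 \<and> Q \<le> (dist v w)\<^sup>2)"
  shows "sqrt Q \<le> 2 * r"
proof -
  have long_side: "sqrt Q \<le> 2 * r" if "4 * Q \<le> (dist p q)\<^sup>2" "p \<in> S" "q \<in> S" for p q
  proof -
    have "2 * sqrt Q = sqrt (4 * Q)"
      by (simp add: real_sqrt_mult)
    also have "\<dots> \<le> dist p q"
      using that(1) by (intro real_le_lsqrt) simp_all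
    finally show ?thesis
      using convex_two_cballs_cover_dist[OF assms(1,2) that(2,3)] by simp
  qed
  from assms(6) consider "4 * Q \<le> (dist u v)\<^sup>2" | "4 * Q \<le> (dist u w)\<^sup>2"
    | "Q \<le> (dist u v)\<^sup>2" "Q \<le> (dist u w)\<^sup>2" "Q \<le> (dist v w)\<^sup>2"
    by blast
  then show ?thesis
  proof cases
    case 3
    then show ?thesis
      using assms(2-5) by (intro two_cballs_cover_separated[of u v w c1 r c2])
        (auto intro: real_le_lsqrt)
  qed (use long_side assms(3-5) in blast)+
qed

text \<open>The triangle \<open>(0,0)\<close>, \<open>(a,t)\<close>, \<open>(s,b)\<close> with \<open>L = a\<close>, \<open>W = b\<close>; \<open>Q\<close> is \<open>d\<^sup>2\<close>.\<close>
lemma corner_triangle_sides_real: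
  fixes a b s t :: real
  assumes "0 \<le> b" "b \<le> a" "0 \<le> s" "s \<le> a" "0 \<le> t" "t \<le> b"
  defines "Q \<equiv> (a\<^sup>2 + 4 * b\<^sup>2) / 16"
  shows "4 * Q \<le> a\<^sup>2 + t\<^sup>2 \<or> 4 * Q \<le> s\<^sup>2 + b\<^sup>2 \<or>
    (Q \<le> a\<^sup>2 + t\<^sup>2 \<and> Q \<le> s\<^sup>2 + b\<^sup>2 \<and> Q \<le> (a - s)\<^sup>2 + (b - t)\<^sup>2)"
proof (cases "4 * Q \<le> a\<^sup>2 + t\<^sup>2 \<or> 4 * Q \<le> s\<^sup>2 + b\<^sup>2")
  case False
  then have short_uw: "4 * s\<^sup>2 < a\<^sup>2" and short_uv: "3 * a\<^sup>2 + 4 * t\<^sup>2 < 4 * b\<^sup>2"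
    unfolding Q_def by auto
  have "s < a / 2"
  proof (rule ccontr)
    assume "\<not> s < a / 2"
    then have "(a / 2)\<^sup>2 \<le> s\<^sup>2" using assms by (intro power_mono) auto
    then show False using short_uw by (simp add: power_divide)
  qed
  then have "(a / 2)\<^sup>2 \<le> (a - s)\<^sup>2" using assms by (intro power_mono) auto
  then have a_gap: "a\<^sup>2 \<le> 4 * (a - s)\<^sup>2" by (simp add: power_divide)
  have "b\<^sup>2 \<le> a\<^sup>2" using assms by (intro power_mono) auto
  have "t < b / 2"
  proof (rule ccontr)
    assume "\<not> t < b / 2"
    then have "(b / 2)\<^sup>2 \<le> t\<^sup>2" using assms by (intro power_mono) auto
    then show False using short_uv \<open>b\<^sup>2 \<le> a\<^sup>2\<close> by (simp add: power_divide)
  qed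
  then have "(b / 2)\<^sup>2 \<le> (b - t)\<^sup>2" using assms by (intro power_mono) auto
  then have b_gap: "b\<^sup>2 \<le> 4 * (b - t)\<^sup>2" by (simp add: power_divide)
  have "0 \<le> a\<^sup>2" "0 \<le> b\<^sup>2" "0 \<le> s\<^sup>2" "0 \<le> t\<^sup>2" "0 \<le> (a - s)\<^sup>2" "0 \<le> (b - t)\<^sup>2"
    by simp_all
  then show ?thesis
    using a_gap b_gap short_uv \<open>b\<^sup>2 \<le> a\<^sup>2\<close> unfolding Q_def add_divide_distrib
    by (intro disjI2 conjI) linarith+
qed auto

lemma dist_prod_power2: "(dist p q)\<^sup>2 = (fst p - fst q)\<^sup>2 + (snd p - snd q)\<^sup>2"
  for p q :: "real \<times> real"
  by (simp add: dist_prod_def dist_real_def)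

text \<open>
  The hypotheses on the coordinates say that \<open>w\<close> lies horizontally between \<open>u\<close> and \<open>v\<close>, and \<open>v\<close>
  vertically between \<open>u\<close> and \<open>w\<close>.
\<close>
lemma corner_triangle_sides:
  fixes u v w :: "real \<times> real"
  assumes "\<bar>fst u - fst w\<bar> + \<bar>fst w - fst v\<bar> = a" "\<bar>fst u - fst v\<bar> = a"
    and "\<bar>snd u - snd v\<bar> + \<bar>snd v - snd w\<bar> = b" "\<bar>snd u - snd w\<bar> = b"
  defines "Q \<equiv> ((max a b)\<^sup>2 + 4 * (min a b)\<^sup>2) / 16"
  shows "4 * Q \<le> (dist u v)\<^sup>2 \<or> 4 * Q \<le> (dist u w)\<^sup>2 \<or>
    (Q \<le> (dist u v)\<^sup>2 \<and> Q \<le> (dist u w)\<^sup>2 \<and> Q \<le> (dist v w)\<^sup>2)"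
proof -
  define s where "s = \<bar>fst u - fst w\<bar>"
  define t where "t = \<bar>snd u - snd v\<bar>"
  have "\<bar>fst v - fst w\<bar> = a - s" "\<bar>snd v - snd w\<bar> = b - t"
    using assms(1,3) unfolding s_def t_def by (simp_all add: abs_minus_commute)
  then have dists: "(dist u v)\<^sup>2 = a\<^sup>2 + t\<^sup>2" "(dist u w)\<^sup>2 = s\<^sup>2 + b\<^sup>2"
    "(dist v w)\<^sup>2 = (a - s)\<^sup>2 + (b - t)\<^sup>2"
    using assms(2,4) unfolding dist_prod_power2 s_def t_def by (metis power2_abs)+
  have "0 \<le> s" "s \<le> a" "0 \<le> t" "t \<le> b"
    using assms(1-4) unfolding s_def t_def by auto
  show ?thesis
  proof (cases "b \<le> a")
    case True
    then show ?thesis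
      using corner_triangle_sides_real[of b a s t] \<open>0 \<le> t\<close> \<open>0 \<le> s\<close> \<open>s \<le> a\<close> \<open>t \<le> b\<close>
      unfolding Q_def dists by simp
  next
    case False
    then show ?thesis
      using corner_triangle_sides_real[of a b t s] \<open>0 \<le> t\<close> \<open>0 \<le> s\<close> \<open>s \<le> a\<close> \<open>t \<le> b\<close>
      unfolding Q_def dists by (simp add: add.commute, blast)
  qed
qed

lemma bounded_mem_bbox:
  fixes S :: "(real \<times> real) set"
  assumes "bounded S" "p \<in> S"
  shows "xmin S \<le> fst p" "fst p \<le> xmax S" "ymin S \<le> snd p" "snd p \<le> ymax S"
proof -
  have "bounded (fst ` S)" "bounded (snd ` S)"
    using assms(1) by (auto intro: bounded_linear_image bounded_linear_fst bounded_linear_snd)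
  then show "xmin S \<le> fst p" "fst p \<le> xmax S" "ymin S \<le> snd p" "snd p \<le> ymax S"
    unfolding xmin_def xmax_def ymin_def ymax_def using assms(2)
    by (auto intro: cInf_lower cSup_upper bounded_imp_bdd_above bounded_imp_bdd_below)
qed

lemma r_opt_greatest:
  assumes "bounded X" and "\<And>r c1 c2. 0 \<le> r \<Longrightarrow> X \<subseteq> cball c1 r \<union> cball c2 r \<Longrightarrow> d \<le> r"
  shows "d \<le> r_opt X"
proof -
  obtain c e where "0 \<le> e" "X \<subseteq> cball c e"
    using assms(1) unfolding bounded_subset_cball by blast
  then have "{r. r \<ge> 0 \<and> (\<exists>c1 c2. X \<subseteq> cball c1 r \<union> cball c2 r)} \<noteq> {}" by blast
  then show ?thesis
    unfolding r_opt_def using assms(2) by (auto intro: cInf_greatest)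
qed

theorem lemma2:
  fixes P :: "(real \<times> real) set" and u v w :: "real \<times> real" and cx cy :: real
  assumes "convex_polygon P"
    and "bbox_W P > 0"
    and "vertex_of u P" and "vertex_of v P" and "vertex_of w P"
    and "\<not> collinear {u, v, w}"
    and "cx \<in> {xmin P, xmax P}" and "cy \<in> {ymin P, ymax P}"
    and "u = (cx, cy)"
    and "fst v = xmin P + xmax P - cx"
    and "snd w = ymin P + ymax P - cy"
  shows "sqrt ((bbox_L P)\<^sup>2 + 4 * (bbox_W P)\<^sup>2) / 4 \<le> 2 * r_opt P"
proof -
  obtain S where "finite S" "P = convex hull S"
    using assms(1) unfolding convex_polygon_def by blast
  then have "convex P" "bounded P"
    by (auto intro: compact_imp_bounded compact_convex_hull finite_imp_compact)
  have "u \<in> P" "v \<in> P" "w \<in> P"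
    using assms(3-5) unfolding vertex_of_def extreme_point_of_def by auto
  note box = bounded_mem_bbox[OF \<open>bounded P\<close>]
  define Q where "Q = ((bbox_L P)\<^sup>2 + 4 * (bbox_W P)\<^sup>2) / 16"
  have "\<bar>fst u - fst w\<bar> + \<bar>fst w - fst v\<bar> = xmax P - xmin P"
    "\<bar>fst u - fst v\<bar> = xmax P - xmin P"
    using assms(7,9,10) box(1,2)[OF \<open>u \<in> P\<close>] box(1,2)[OF \<open>w \<in> P\<close>] by auto
  moreover have "\<bar>snd u - snd v\<bar> + \<bar>snd v - snd w\<bar> = ymax P - ymin P"
    "\<bar>snd u - snd w\<bar> = ymax P - ymin P"
    using assms(8,9,11) box(3,4)[OF \<open>u \<in> P\<close>] box(3,4)[OF \<open>v \<in> P\<close>] by auto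
  ultimately have sides: "4 * Q \<le> (dist u v)\<^sup>2 \<or> 4 * Q \<le> (dist u w)\<^sup>2 \<or>
      (Q \<le> (dist u v)\<^sup>2 \<and> Q \<le> (dist u w)\<^sup>2 \<and> Q \<le> (dist v w)\<^sup>2)"
    unfolding Q_def bbox_L_def bbox_W_def by (rule corner_triangle_sides)
  have "sqrt Q / 2 \<le> r_opt P"
  proof (rule r_opt_greatest[OF \<open>bounded P\<close>])
    fix r c1 c2
    assume "P \<subseteq> cball c1 r \<union> cball c2 r"
    from convex_two_cballs_cover_triangle[OF \<open>convex P\<close> this \<open>u \<in> P\<close> \<open>v \<in> P\<close> \<open>w \<in> P\<close> sides]
    show "sqrt Q / 2 \<le> r" by simp
  qed
  moreover have "sqrt ((bbox_L P)\<^sup>2 + 4 * (bbox_W P)\<^sup>2) = 4 * sqrt Q"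
    unfolding Q_def by (simp add: real_sqrt_divide)
  ultimately show ?thesis by simp
qed

end
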